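(* Let $(V_i)_{i\ge0}$ be a sequence of non-negative integers with $V_i-1\le V_{i+1}\le V_i$ for all $i$. Suppose $\rho=(\rho_1,\dots,\rho_t)\in\mathbb{Z}^t$ has non-negative entries, set $n=\|\rho\|=\sum\rho_i^2$, and suppose that for all integers $0\le k\le n/2$, $$8V_k=\min\{\|c\|-t:\ c\in\mathrm{Char}(\mathbb{Z}^t),\ |c\cdot\rho|=n-2k\}.$$ Then the entries $\rho_i$ with $\rho_i\ge2$ (as a multiset) are determined by the sequence $(V_i)_{i\ge0}$; in particular they are independent of $n$ and $t$.
   Context: $\mathbb{Z}^t$ carries the standard inner product, $\|c\|=c\cdot c$, and $\mathrm{Char}(\mathbb{Z}^t)$ is the set of vectors all of whose coordinates are odd. *)

theory Defs
  imports Main "HOL-Library.Multiset"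
begin

text \<open>Vectors in Z^t are represented as int lists of length t.\<close>

definition ip :: "int list \<Rightarrow> int list \<Rightarrow> int" where
  "ip c r = sum_list (map (\<lambda>(x, y). x * y) (zip c r))"

definition sqn :: "int list \<Rightarrow> int" where
  "sqn c = ip c c"

definition Char :: "nat \<Rightarrow> int list set" where
  "Char t = {c. length c = t \<and> (\<forall>x\<in>set c. odd x)}"

definition is_min_of :: "int \<Rightarrow> int set \<Rightarrow> bool" where
  "is_min_of m S \<longleftrightarrow> m \<in> S \<and> (\<forall>y\<in>S. m \<le> y)"

definition realizes :: "(nat \<Rightarrow> nat) \<Rightarrow> int list \<Rightarrow> bool" where
  "realizes V \<rho> \<longleftrightarrow>
     (\<forall>x\<in>set \<rho>. 0 \<le> x) \<and>
     (\<forall>k::nat. 2 * int k \<le> sqn \<rho> \<longrightarrow>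
        is_min_of (8 * int (V k))
          {sqn c - int (length \<rho>) | c. c \<in> Char (length \<rho>) \<and>
                                         \<bar>ip c \<rho>\<bar> = sqn \<rho> - 2 * int k})"

end

theory Submission
  imports Defs Complex_Main
begin

text \<open>
  Put \<open>N = \<Sum>\<^sub>i \<rho>\<^sub>i(\<rho>\<^sub>i - 1)/2\<close>. The all-ones vector shows \<open>V N = 0\<close>, and a characteristic
  vector with \<open>\<parallel>c\<parallel> = t\<close> has entries \<open>\<plusminus>1\<close>, so \<open>V k > 0\<close> for \<open>k < N\<close>: thus \<open>N\<close> is the first
  zero of \<open>V\<close>. Minimising \<open>(\<parallel>c\<parallel> - t)/8 - \<lambda>(c\<cdot>\<rho> - \<Sum>\<^sub>i \<rho>\<^sub>i)/2\<close> coordinatewise over odd \<open>c\<close>, and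
  alternatively first over the value \<open>c\<cdot>\<rho> = n - 2k\<close>, gives for \<open>0 \<le> \<lambda> < 1/2\<close>
  \<open>\<Sum>\<^sub>i \<psi>(\<lambda>\<rho>\<^sub>i) = min\<^sub>k\<^sub>\<le>\<^sub>N (V k - \<lambda>(N - k))\<close>. The left-hand side only sees the entries \<open>\<ge> 3\<close>,
  and it determines them: at \<open>\<lambda> = (2M + 1)/(2M\<^sup>2)\<close> the largest entry \<open>M\<close> is the only one
  contributing. Finally the number of entries equal to \<open>2\<close> is recovered from \<open>N\<close>.
\<close>

lemma ip_Nil [simp]: "ip [] r = 0"
  by (simp add: ip_def)

lemma ip_Cons [simp]: "ip (a # c) (b # r) = a * b + ip c r"
  by (simp add: ip_def)

lemma sqn_Nil [simp]: "sqn [] = 0"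
  by (simp add: sqn_def)

lemma sqn_Cons [simp]: "sqn (a # c) = a * a + sqn c"
  by (simp add: sqn_def)

lemma ip_map_uminus: "ip (map uminus c) r = - ip c r"
  by (induction c r rule: list_induct2') (auto simp: ip_def)

lemma sqn_map_uminus: "sqn (map uminus c) = sqn c"
  by (induction c) auto

lemma ip_replicate_one: "ip (replicate (length r) 1) r = sum_list r"
  by (induction r) auto

lemma sqn_replicate_one: "sqn (replicate n 1) = int n"
  by (induction n) auto

lemma Char_uminus: "c \<in> Char t \<Longrightarrow> map uminus c \<in> Char t"
  by (auto simp: Char_def)

lemma sqn_odd_ge_length:
  assumes "\<forall>x\<in>set c. odd x"
  shows "int (length c) \<le> sqn c"
  using assms
proof (induction c)
  case (Cons a c)
  then have "a \<noteq> 0" by auto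
  then have "1 \<le> a * a"
    by (metis int_one_le_iff_zero_less not_square_less_zero zero_less_mult_iff linorder_neq_iff)
  with Cons show ?case by simp
qed simp

lemma sqn_odd_eq_length_imp_units:
  assumes "\<forall>x\<in>set c. odd x" "sqn c = int (length c)"
  shows "\<forall>x\<in>set c. x = 1 \<or> x = -1"
  using assms
proof (induction c)
  case (Cons a c)
  have "a \<noteq> 0" using Cons.prems by auto
  then have a: "1 \<le> a * a"
    by (metis int_one_le_iff_zero_less not_square_less_zero zero_less_mult_iff linorder_neq_iff)
  have "int (length c) \<le> sqn c" using Cons.prems by (intro sqn_odd_ge_length) auto
  with a Cons.prems have "a * a = 1" "sqn c = int (length c)" by auto
  with Cons show ?case by (auto simp: zmult_eq_1_iff)
qed simp

lemma abs_ip_units_le_sum: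
  assumes "length c = length r" "\<forall>x\<in>set c. x = 1 \<or> x = -1" "\<forall>x\<in>set r. 0 \<le> x"
  shows "\<bar>ip c r\<bar> \<le> sum_list r"
  using assms by (induction c r rule: list_induct2) (auto simp: abs_le_iff)

section \<open>The function \<open>\<psi>\<close>\<close>

text \<open>\<open>\<psi> \<mu>\<close> is the minimum of \<open>(c\<^sup>2 - 1)/8 - \<mu>(c - 1)/2\<close> over odd \<open>c\<close>, attained at \<open>c = 2\<lfloor>\<mu>\<rfloor> + 1\<close>.\<close>

definition psi :: "real \<Rightarrow> real" where
  "psi \<mu> = of_int \<lfloor>\<mu>\<rfloor> * (of_int \<lfloor>\<mu>\<rfloor> + 1) / 2 - \<mu> * of_int \<lfloor>\<mu>\<rfloor>"

lemma psi_le_odd: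
  fixes c :: int
  assumes "odd c"
  shows "psi \<mu> \<le> (of_int (c * c) - 1) / 8 - \<mu> * (of_int c - 1) / 2"
proof -
  obtain x where c: "c = 2 * x + 1" using assms by (metis oddE)
  define j where "j = \<lfloor>\<mu>\<rfloor>"
  have j: "of_int j \<le> \<mu>" "\<mu> < of_int j + 1" unfolding j_def by linarith+
  have "(of_int (c * c) - 1) / 8 - \<mu> * (of_int c - 1) / 2 - psi \<mu>
      = (of_int x - of_int j) * ((of_int x + of_int j + 1) / 2 - \<mu>)"
    unfolding psi_def c j_def[symmetric] by (simp add: field_simps)
  moreover have "(of_int x - of_int j) * ((of_int x + of_int j + 1) / 2 - \<mu>) \<ge> (0::real)"
  proof (cases "j < x")
    case True
    then have "real_of_int x \<ge> of_int j + 1" by linarith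
    with j show ?thesis by (intro mult_nonneg_nonneg) auto
  next
    case False
    then have "x = j \<or> real_of_int x \<le> of_int j - 1" by linarith
    with j show ?thesis by (auto intro: mult_nonpos_nonpos)
  qed
  ultimately show ?thesis by linarith
qed

lemma psi_eq_floor:
  "psi \<mu> = (of_int ((2 * \<lfloor>\<mu>\<rfloor> + 1) * (2 * \<lfloor>\<mu>\<rfloor> + 1)) - 1) / 8 - \<mu> * (of_int (2 * \<lfloor>\<mu>\<rfloor> + 1) - 1) / 2"
  unfolding psi_def by (simp add: field_simps)

lemma psi_eq_0:
  assumes "0 \<le> \<mu>" "\<mu> < 1"
  shows "psi \<mu> = 0"
proof -
  have "\<lfloor>\<mu>\<rfloor> = 0" using assms by linarith
  then show ?thesis by (simp add: psi_def)
qed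

lemma psi_neg:
  assumes "1 < \<mu>" "\<mu> < 2"
  shows "psi \<mu> < 0"
proof -
  have "\<lfloor>\<mu>\<rfloor> = 1" using assms by linarith
  with assms show ?thesis by (simp add: psi_def)
qed

lemma psi_nonpos:
  assumes "0 \<le> \<mu>"
  shows "psi \<mu> \<le> 0"
proof -
  define j where "j = \<lfloor>\<mu>\<rfloor>"
  have j: "0 \<le> j" "real_of_int j \<le> \<mu>" unfolding j_def using assms by linarith+
  then have "real_of_int j * of_int j \<le> \<mu> * of_int j" by (intro mult_right_mono) auto
  moreover have "j \<le> j * j" using j(1) by (cases "j = 0") (auto simp: mult_le_cancel_left1)
  then have "real_of_int j \<le> of_int j * of_int j" by (metis of_int_le_iff of_int_mult)
  ultimately show ?thesis unfolding psi_def j_def[symmetric] by (simp add: field_simps)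
qed

definition psi_sum :: "int multiset \<Rightarrow> real \<Rightarrow> real" where
  "psi_sum A l = (\<Sum>x\<in>#A. psi (l * of_int x))"

lemma psi_sum_empty [simp]: "psi_sum {#} l = 0"
  by (simp add: psi_sum_def)

lemma psi_sum_add_mset [simp]: "psi_sum (add_mset x A) l = psi (l * of_int x) + psi_sum A l"
  by (simp add: psi_sum_def)

lemma psi_sum_union: "psi_sum (A + B) l = psi_sum A l + psi_sum B l"
  by (simp add: psi_sum_def)

lemma psi_sum_eq_0:
  assumes "\<forall>x\<in>#A. 0 \<le> l * of_int x \<and> l * of_int x < 1"
  shows "psi_sum A l = 0"
  using assms by (induction A) (auto simp: psi_eq_0)

lemma psi_sum_nonpos:
  assumes "\<forall>x\<in>#A. 0 \<le> x" "0 \<le> l"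
  shows "psi_sum A l \<le> 0"
  using assms by (induction A) (auto intro!: add_nonpos_nonpos psi_nonpos)

text \<open>The quantity whose minimum over \<open>c \<in> Char(\<int>\<^sup>t)\<close> is computed in two ways.\<close>

definition char_energy :: "real \<Rightarrow> int list \<Rightarrow> int list \<Rightarrow> real" where
  "char_energy l \<rho> c =
     (of_int (sqn c) - of_nat (length \<rho>)) / 8 - l * (of_int (ip c \<rho>) - of_int (sum_list \<rho>)) / 2"

lemma char_energy_Nil [simp]: "char_energy l [] [] = 0"
  by (simp add: char_energy_def)

lemma char_energy_Cons [simp]:
  "char_energy l (b # \<rho>) (a # c) =
     (of_int (a * a) - 1) / 8 - l * of_int b * (of_int a - 1) / 2 + char_energy l \<rho> c"
  by (simp add: char_energy_def field_simps)

lemma psi_sum_le_char_energy: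
  assumes "length c = length \<rho>" "\<forall>x\<in>set c. odd x"
  shows "psi_sum (mset \<rho>) l \<le> char_energy l \<rho> c"
  using assms
proof (induction c \<rho> rule: list_induct2)
  case (Cons a c b \<rho>)
  then have "psi (l * of_int b) \<le> (of_int (a * a) - 1) / 8 - l * of_int b * (of_int a - 1) / 2"
    using psi_le_odd[of a "l * of_int b"] by simp
  with Cons show ?case by simp
qed simp

lemma psi_sum_eq_char_energy_floor:
  "psi_sum (mset \<rho>) l = char_energy l \<rho> (map (\<lambda>r. 2 * \<lfloor>l * of_int r\<rfloor> + 1) \<rho>)"
  by (induction \<rho>) (simp_all add: psi_eq_floor[of "l * of_int _"] mult.assoc)

definition choose2_sum :: "int multiset \<Rightarrow> int" where
  "choose2_sum A = (\<Sum>x\<in>#A. x * (x - 1) div 2)"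

lemma choose2_sum_nonneg: "0 \<le> choose2_sum A"
proof -
  have "0 \<le> x * (x - 1) div 2" for x :: int
    by (cases "0 < x") (auto simp: zero_le_mult_iff)
  then show ?thesis unfolding choose2_sum_def by (induction A) auto
qed

lemma two_choose2_sum_mset: "2 * choose2_sum (mset \<rho>) = sqn \<rho> - sum_list \<rho>"
proof (induction \<rho>)
  case (Cons a \<rho>)
  have "2 * (a * (a - 1) div 2) = a * a - a" by (simp add: algebra_simps)
  with Cons show ?case by (simp add: choose2_sum_def algebra_simps)
qed (simp add: choose2_sum_def)

lemma char_energy_eq:
  assumes "ip c \<rho> = sqn \<rho> - 2 * int k"
  shows "char_energy l \<rho> c =
    (of_int (sqn c) - of_nat (length \<rho>)) / 8 - l * (of_int (choose2_sum (mset \<rho>)) - of_nat k)"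
proof -
  have "ip c \<rho> - sum_list \<rho> = 2 * (choose2_sum (mset \<rho>) - int k)"
    using assms two_choose2_sum_mset[of \<rho>] by simp
  then have "real_of_int (ip c \<rho>) - of_int (sum_list \<rho>) = 2 * (of_int (choose2_sum (mset \<rho>)) - of_nat k)"
    by (metis of_int_diff of_int_mult of_int_numeral of_int_of_nat_eq)
  then show ?thesis unfolding char_energy_def by simp
qed

section \<open>What a realizing vector reveals\<close>

lemma realizes_nonneg: "realizes V \<rho> \<Longrightarrow> \<forall>x\<in>set \<rho>. 0 \<le> x"
  by (simp add: realizes_def)

lemma realizes_two_choose2_sum_le:
  assumes "realizes V \<rho>"
  shows "2 * choose2_sum (mset \<rho>) \<le> sqn \<rho>"
  using two_choose2_sum_mset[of \<rho>] sum_list_nonneg realizes_nonneg[OF assms] by fastforce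

lemma realizes_lower_bound:
  assumes "realizes V \<rho>" "2 * int k \<le> sqn \<rho>" "c \<in> Char (length \<rho>)" "\<bar>ip c \<rho>\<bar> = sqn \<rho> - 2 * int k"
  shows "8 * int (V k) \<le> sqn c - int (length \<rho>)"
  using assms unfolding realizes_def is_min_of_def by blast

lemma realizes_attained:
  assumes "realizes V \<rho>" "2 * int k \<le> sqn \<rho>"
  obtains c where "c \<in> Char (length \<rho>)" "ip c \<rho> = sqn \<rho> - 2 * int k"
    "8 * int (V k) = sqn c - int (length \<rho>)"
proof -
  obtain c where c: "c \<in> Char (length \<rho>)" "\<bar>ip c \<rho>\<bar> = sqn \<rho> - 2 * int k"
    "8 * int (V k) = sqn c - int (length \<rho>)"
    using assms unfolding realizes_def is_min_of_def by blast
  show thesis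
  proof (cases "0 \<le> ip c \<rho>")
    case True
    with c show thesis by (intro that[of c]) auto
  next
    case False
    with c show thesis
      by (intro that[of "map uminus c"]) (auto simp: Char_uminus ip_map_uminus sqn_map_uminus)
  qed
qed

definition first_zero :: "(nat \<Rightarrow> nat) \<Rightarrow> nat" where
  "first_zero V = (LEAST k. V k = 0)"

lemma realizes_V_choose2_sum_eq_0:
  assumes "realizes V \<rho>"
  shows "V (nat (choose2_sum (mset \<rho>))) = 0"
proof -
  let ?N = "nat (choose2_sum (mset \<rho>))"
  have N: "int ?N = choose2_sum (mset \<rho>)" using choose2_sum_nonneg by simp
  have "0 \<le> sum_list \<rho>" using realizes_nonneg[OF assms] by (simp add: sum_list_nonneg)
  then have "\<bar>ip (replicate (length \<rho>) 1) \<rho>\<bar> = sqn \<rho> - 2 * int ?N"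
    using N two_choose2_sum_mset[of \<rho>] by (simp add: ip_replicate_one)
  moreover have "replicate (length \<rho>) 1 \<in> Char (length \<rho>)" by (simp add: Char_def)
  moreover have "2 * int ?N \<le> sqn \<rho>" using N realizes_two_choose2_sum_le[OF assms] by simp
  ultimately have "8 * int (V ?N) \<le> sqn (replicate (length \<rho>) 1) - int (length \<rho>)"
    using realizes_lower_bound[OF assms] by blast
  then have "8 * int (V ?N) \<le> 0" by (simp add: sqn_replicate_one)
  then show ?thesis by simp
qed

text \<open>A characteristic vector with \<open>\<parallel>c\<parallel> = t\<close> has entries \<open>\<plusminus>1\<close>, so \<open>\<bar>c \<cdot> \<rho>\<bar> \<le> \<Sum>\<^sub>i \<rho>\<^sub>i\<close>.\<close>

lemma realizes_V_pos:
  assumes "realizes V \<rho>" "int k < choose2_sum (mset \<rho>)"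
  shows "0 < V k"
proof (rule ccontr)
  assume "\<not> 0 < V k"
  have k: "2 * int k \<le> sqn \<rho>" using assms realizes_two_choose2_sum_le by fastforce
  obtain c where c: "c \<in> Char (length \<rho>)" "ip c \<rho> = sqn \<rho> - 2 * int k"
    "8 * int (V k) = sqn c - int (length \<rho>)"
    using realizes_attained[OF assms(1) k] .
  have odd: "\<forall>x\<in>set c. odd x" and len: "length c = length \<rho>" using c(1) by (auto simp: Char_def)
  have "sqn c = int (length c)" using c(3) \<open>\<not> 0 < V k\<close> len by simp
  then have "\<bar>ip c \<rho>\<bar> \<le> sum_list \<rho>"
    using abs_ip_units_le_sum len sqn_odd_eq_length_imp_units[OF odd] realizes_nonneg[OF assms(1)]
    by blast
  then show False using c(2) assms(2) two_choose2_sum_mset[of \<rho>] by simp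
qed

lemma realizes_choose2_sum_eq_first_zero:
  assumes "realizes V \<rho>"
  shows "choose2_sum (mset \<rho>) = int (first_zero V)"
proof -
  have "first_zero V = nat (choose2_sum (mset \<rho>))"
    unfolding first_zero_def
  proof (rule Least_equality)
    show "V (nat (choose2_sum (mset \<rho>))) = 0" by (rule realizes_V_choose2_sum_eq_0[OF assms])
    show "nat (choose2_sum (mset \<rho>)) \<le> k" if "V k = 0" for k
      using realizes_V_pos[OF assms, of k] that by linarith
  qed
  then show ?thesis using choose2_sum_nonneg by simp
qed

lemma psi_sum_le_V:
  assumes "realizes V \<rho>" "2 * int k \<le> sqn \<rho>"
  shows "psi_sum (mset \<rho>) l \<le> real (V k) - l * (of_int (choose2_sum (mset \<rho>)) - of_nat k)"
proof -
  obtain c where c: "c \<in> Char (length \<rho>)" "ip c \<rho> = sqn \<rho> - 2 * int k"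
    "8 * int (V k) = sqn c - int (length \<rho>)"
    using realizes_attained[OF assms] .
  have "psi_sum (mset \<rho>) l \<le> char_energy l \<rho> c"
    using c(1) by (intro psi_sum_le_char_energy) (auto simp: Char_def)
  also have "\<dots> = real (V k) - l * (of_int (choose2_sum (mset \<rho>)) - of_nat k)"
  proof -
    have "real_of_int (sqn c) - of_nat (length \<rho>) = 8 * real (V k)"
      using arg_cong[OF c(3), of real_of_int] by simp
    then show ?thesis by (simp add: char_energy_eq[OF c(2)])
  qed
  finally show ?thesis .
qed

lemma floor_mult_le_half:
  fixes l :: real and r :: int
  assumes "0 \<le> l" "l < 1/2" "0 \<le> r"
  shows "0 \<le> \<lfloor>l * of_int r\<rfloor> * r" "2 * (\<lfloor>l * of_int r\<rfloor> * r) \<le> r * (r - 1)"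
proof -
  show "0 \<le> \<lfloor>l * of_int r\<rfloor> * r" using assms by simp
  show "2 * (\<lfloor>l * of_int r\<rfloor> * r) \<le> r * (r - 1)"
  proof (cases "r = 0")
    case False
    have "real_of_int \<lfloor>l * of_int r\<rfloor> \<le> l * of_int r" by linarith
    also have "\<dots> < of_int r / 2" using assms False by simp
    finally have "2 * \<lfloor>l * of_int r\<rfloor> \<le> r - 1" by linarith
    then have "(2 * \<lfloor>l * of_int r\<rfloor>) * r \<le> (r - 1) * r" using assms(3) by (intro mult_right_mono)
    then show ?thesis by (simp add: algebra_simps)
  qed simp
qed

text \<open>The minimiser \<open>c\<^sub>i = 2\<lfloor>\<lambda>\<rho>\<^sub>i\<rfloor> + 1\<close> of the energy has \<open>c \<cdot> \<rho> = n - 2k\<close> with \<open>0 \<le> k \<le> N\<close>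
  because \<open>\<lambda> < 1/2\<close>.\<close>

lemma psi_sum_ge_V:
  assumes "realizes V \<rho>" "0 \<le> l" "l < 1/2"
  obtains k where "int k \<le> choose2_sum (mset \<rho>)"
    "real (V k) - l * (of_int (choose2_sum (mset \<rho>)) - of_nat k) \<le> psi_sum (mset \<rho>) l"
proof -
  define f where "f r = \<lfloor>l * of_int r\<rfloor>" for r
  define c where "c = map (\<lambda>r. 2 * f r + 1) \<rho>"
  define m where "m = sum_list (map (\<lambda>r. f r * r) \<rho>)"
  note bounds = floor_mult_le_half[OF assms(2,3) bspec[OF realizes_nonneg[OF assms(1)]], folded f_def]
  have m0: "0 \<le> m" unfolding m_def by (intro sum_list_nonneg) (auto simp: bounds(1))
  have "2 * m = sum_list (map (\<lambda>r. 2 * (f r * r)) \<rho>)"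
    unfolding m_def by (simp add: sum_list_const_mult)
  also have "\<dots> \<le> sum_list (map (\<lambda>r. r * (r - 1)) \<rho>)" by (intro sum_list_mono) (simp add: bounds(2))
  also have "\<dots> = 2 * choose2_sum (mset \<rho>)"
    unfolding two_choose2_sum_mset by (induction \<rho>) (auto simp: algebra_simps)
  finally have mN: "m \<le> choose2_sum (mset \<rho>)" by simp
  define k where "k = nat (choose2_sum (mset \<rho>) - m)"
  have kN: "int k = choose2_sum (mset \<rho>) - m" unfolding k_def using mN by simp
  have ipc: "ip c \<rho> = sqn \<rho> - 2 * int k"
  proof -
    have "ip c \<rho> = sum_list \<rho> + 2 * m"
      unfolding c_def m_def by (induction \<rho>) (auto simp: algebra_simps)
    then show ?thesis using kN two_choose2_sum_mset[of \<rho>] by simp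
  qed
  have "0 \<le> sum_list \<rho>" using realizes_nonneg[OF assms(1)] by (simp add: sum_list_nonneg)
  then have k2: "2 * int k \<le> sqn \<rho>" and "0 \<le> sqn \<rho> - 2 * int k"
    using m0 kN two_choose2_sum_mset[of \<rho>] by linarith+
  then have "\<bar>ip c \<rho>\<bar> = sqn \<rho> - 2 * int k" by (simp add: ipc)
  moreover have "c \<in> Char (length \<rho>)" unfolding c_def Char_def by auto
  ultimately have "8 * int (V k) \<le> sqn c - int (length \<rho>)"
    by (intro realizes_lower_bound[OF assms(1) k2])
  then have "real_of_int (8 * int (V k)) \<le> real_of_int (sqn c - int (length \<rho>))"
    by (simp only: of_int_le_iff)
  then have "8 * real (V k) \<le> real_of_int (sqn c) - of_nat (length \<rho>)" by simp
  then have "real (V k) - l * (of_int (choose2_sum (mset \<rho>)) - of_nat k) \<le> char_energy l \<rho> c"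
    by (simp add: char_energy_eq[OF ipc])
  also have "\<dots> = psi_sum (mset \<rho>) l"
    unfolding c_def f_def by (rule psi_sum_eq_char_energy_floor[symmetric])
  finally show thesis using kN m0 by (intro that[of k]) simp_all
qed

lemma realizes_psi_sum_eq_Min:
  assumes "realizes V \<rho>" "0 \<le> l" "l < 1/2"
  shows "psi_sum (mset \<rho>) l =
    (MIN k\<in>{..first_zero V}. real (V k) - l * (real (first_zero V) - real k))"
proof -
  have N: "choose2_sum (mset \<rho>) = int (first_zero V)"
    by (rule realizes_choose2_sum_eq_first_zero[OF assms(1)])
  have le: "psi_sum (mset \<rho>) l \<le> real (V k) - l * (real (first_zero V) - real k)"
    if "k \<le> first_zero V" for k
    using psi_sum_le_V[OF assms(1), of k l] realizes_two_choose2_sum_le[OF assms(1)] N that by simp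
  obtain k where k_le: "int k \<le> choose2_sum (mset \<rho>)"
    and ge: "real (V k) - l * (of_int (choose2_sum (mset \<rho>)) - of_nat k) \<le> psi_sum (mset \<rho>) l"
    using psi_sum_ge_V[OF assms] .
  have k: "k \<le> first_zero V" using k_le N by simp
  have "real (V k) - l * (real (first_zero V) - real k) \<le> psi_sum (mset \<rho>) l" using ge N by simp
  with le[OF k] have eq: "psi_sum (mset \<rho>) l = real (V k) - l * (real (first_zero V) - real k)"
    by linarith
  show ?thesis
  proof (rule Min_eqI[symmetric])
    show "psi_sum (mset \<rho>) l \<le> y"
      if "y \<in> (\<lambda>k. real (V k) - l * (real (first_zero V) - real k)) ` {..first_zero V}" for y
      using that le by blast
    show "psi_sum (mset \<rho>) l \<in> (\<lambda>k. real (V k) - l * (real (first_zero V) - real k)) ` {..first_zero V}"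
      using k eq by blast
  qed simp
qed

section \<open>Recovering the entries \<open>\<ge> 2\<close>\<close>

lemma psi_sum_eq_filter_ge3:
  assumes "\<forall>x\<in>#A. 0 \<le> x" "0 \<le> l" "l < 1/2"
  shows "psi_sum A l = psi_sum (filter_mset (\<lambda>x. 3 \<le> x) A) l"
proof -
  have "psi_sum (filter_mset (\<lambda>x. \<not> 3 \<le> x) A) l = 0"
  proof (rule psi_sum_eq_0, rule ballI)
    fix x assume "x \<in># filter_mset (\<lambda>x. \<not> 3 \<le> x) A"
    then have "0 \<le> x" "x \<le> 2" using assms(1) by auto
    then have "0 \<le> l * of_int x" "l * of_int x \<le> l * 2"
      using assms(2) by (auto intro: mult_left_mono)
    then show "0 \<le> l * of_int x \<and> l * of_int x < 1" using assms(3) by linarith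
  qed
  moreover have "psi_sum A l =
      psi_sum (filter_mset (\<lambda>x. 3 \<le> x) A) l + psi_sum (filter_mset (\<lambda>x. \<not> 3 \<le> x) A) l"
    by (metis multiset_partition psi_sum_union)
  ultimately show ?thesis by simp
qed

text \<open>At \<open>\<lambda> = (2M + 1)/(2M\<^sup>2)\<close> we have \<open>1 < \<lambda>M < 2\<close> and \<open>\<lambda>x < 1\<close> for \<open>0 \<le> x < M\<close>.\<close>

lemma psi_sum_separates:
  fixes M :: int
  assumes "M \<in># A" "3 \<le> M" "\<forall>x\<in>#A. 0 \<le> x" "\<forall>x\<in>#B. 0 \<le> x \<and> x < M"
  obtains l :: real where "0 \<le> l" "l < 1/2" "psi_sum A l \<noteq> psi_sum B l"
proof -
  define m where "m = real_of_int M"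
  have m3: "3 \<le> m" using assms(2) unfolding m_def by simp
  define l where "l = (2 * m + 1) / (2 * m * m)"
  have l0: "0 \<le> l" unfolding l_def using m3 by simp
  have "3 * m \<le> m * m" using m3 by (intro mult_right_mono) auto
  then have "2 + m * 4 < m * (m * 2)" using m3 by linarith
  then have lh: "l < 1/2" unfolding l_def using m3 by (simp add: field_simps)
  have lm: "l * m = 1 + 1 / (2 * m)" unfolding l_def using m3 by (simp add: field_simps)
  moreover have "0 < 1 / (2 * m)" "1 / (2 * m) < 1" using m3 by (simp_all add: divide_less_eq)
  ultimately have "1 < l * m" "l * m < 2" by linarith+
  then have "psi (l * m) < 0" by (rule psi_neg)
  moreover obtain A' where A': "A = add_mset M A'" using assms(1) by (metis insert_DiffM)
  moreover have "psi_sum A' l \<le> 0" using assms(3) A' l0 by (intro psi_sum_nonpos) auto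
  ultimately have "psi_sum A l < 0" unfolding m_def by simp
  moreover have "psi_sum B l = 0"
  proof (rule psi_sum_eq_0, rule ballI)
    fix x assume "x \<in># B"
    then have x: "0 \<le> real_of_int x" "real_of_int x \<le> m - 1" using assms(4) unfolding m_def by auto
    then have "l * of_int x \<le> l * (m - 1)" using l0 by (intro mult_left_mono) auto
    also have "l * (m - 1) < 1" unfolding l_def using m3 by (simp add: field_simps)
    finally show "0 \<le> l * of_int x \<and> l * of_int x < 1" using x l0 by simp
  qed
  ultimately show thesis using l0 lh by (intro that[of l]) auto
qed

lemma psi_sum_inj_ge3:
  fixes A B :: "int multiset"
  assumes "\<forall>x\<in>#A. 3 \<le> x" "\<forall>x\<in>#B. 3 \<le> x"
    and "\<And>l. 0 \<le> l \<Longrightarrow> l < 1/2 \<Longrightarrow> psi_sum A l = psi_sum B l"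
  shows "A = B"
  using assms
proof (induction "size A + size B" arbitrary: A B rule: less_induct)
  case less
  show ?case
  proof (cases "A + B = {#}")
    case False
    define M where "M = Max (set_mset (A + B))"
    have M: "M \<in># A + B" unfolding M_def using False by (metis Max_in finite_set_mset set_mset_eq_empty_iff)
    have M_ge: "x \<le> M" if "x \<in># A + B" for x unfolding M_def using that by simp
    consider "M \<in># A" "M \<in># B" | "M \<in># A" "M \<notin># B" | "M \<notin># A" "M \<in># B" using M by auto
    then show ?thesis
    proof cases
      case 1
      then obtain A' B' where A': "A = add_mset M A'" and B': "B = add_mset M B'"
        by (metis insert_DiffM)
      have "A' = B'"
        using less.prems by (intro less.hyps) (auto simp: A' B')
      then show ?thesis by (simp add: A' B')
    next
      case 2
      have "3 \<le> M" "\<forall>x\<in>#A. 0 \<le> x" using 2 less.prems(1) by force+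
      moreover have "\<forall>x\<in>#B. 0 \<le> x \<and> x < M" using 2 M_ge less.prems(2) by (fastforce simp: le_less)
      ultimately obtain l where "0 \<le> l" "l < 1/2" "psi_sum A l \<noteq> psi_sum B l"
        using psi_sum_separates[OF 2(1)] by blast
      with less.prems(3) show ?thesis by blast
    next
      case 3
      have "3 \<le> M" "\<forall>x\<in>#B. 0 \<le> x" using 3 less.prems(2) by force+
      moreover have "\<forall>x\<in>#A. 0 \<le> x \<and> x < M" using 3 M_ge less.prems(1) by (fastforce simp: le_less)
      ultimately obtain l where "0 \<le> l" "l < 1/2" "psi_sum B l \<noteq> psi_sum A l"
        using psi_sum_separates[OF 3(2)] by blast
      with less.prems(3) show ?thesis by fastforce
    qed
  qed simp
qed

lemma choose2_sum_eq_filter_ge3_plus_count2: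
  assumes "\<forall>x\<in>#A. 0 \<le> x"
  shows "choose2_sum A = choose2_sum (filter_mset (\<lambda>x. 3 \<le> x) A) + int (count A 2)"
  using assms
proof (induction A)
  case (add x A)
  then have "x = 0 \<or> x = 1 \<or> x = 2 \<or> 3 \<le> x" by auto
  with add show ?case by (auto simp: choose2_sum_def)
qed (simp add: choose2_sum_def)

theorem theorem2p26:
  fixes V :: "nat \<Rightarrow> nat" and \<rho> \<rho>' :: "int list"
  assumes "\<And>i. V (Suc i) \<le> V i" and "\<And>i. V i \<le> V (Suc i) + 1"
    and "realizes V \<rho>" and "realizes V \<rho>'"
  shows "filter_mset (\<lambda>x. 2 \<le> x) (mset \<rho>) = filter_mset (\<lambda>x. 2 \<le> x) (mset \<rho>')"
proof -
  have nonneg: "\<forall>x\<in>#mset \<rho>. 0 \<le> x" "\<forall>x\<in>#mset \<rho>'. 0 \<le> x"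
    using realizes_nonneg[OF assms(3)] realizes_nonneg[OF assms(4)] by auto
  have ge3: "filter_mset (\<lambda>x. 3 \<le> x) (mset \<rho>) = filter_mset (\<lambda>x. 3 \<le> x) (mset \<rho>')"
  proof (rule psi_sum_inj_ge3)
    fix l :: real assume "0 \<le> l" "l < 1/2"
    then show "psi_sum (filter_mset (\<lambda>x. 3 \<le> x) (mset \<rho>)) l = psi_sum (filter_mset (\<lambda>x. 3 \<le> x) (mset \<rho>')) l"
      using psi_sum_eq_filter_ge3[OF nonneg(1)] psi_sum_eq_filter_ge3[OF nonneg(2)]
        realizes_psi_sum_eq_Min[OF assms(3)] realizes_psi_sum_eq_Min[OF assms(4)] by simp
  qed auto
  have "choose2_sum (mset \<rho>) = choose2_sum (mset \<rho>')"
    using realizes_choose2_sum_eq_first_zero[OF assms(3)] realizes_choose2_sum_eq_first_zero[OF assms(4)]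
    by simp
  then have twos: "count (mset \<rho>) 2 = count (mset \<rho>') 2"
    using choose2_sum_eq_filter_ge3_plus_count2[OF nonneg(1)]
      choose2_sum_eq_filter_ge3_plus_count2[OF nonneg(2)] ge3 by simp
  have "filter_mset (\<lambda>x. 2 \<le> x) M = filter_mset (\<lambda>x. 3 \<le> x) M + replicate_mset (count M 2) 2"
    for M :: "int multiset"
    by (rule multiset_eqI) auto
  then show ?thesis using ge3 twos by simp
qed

end
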